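(* Let $K$ be a complex whose spectral radius $\mathfrak{q}_{r-1}(K)$ is maximum among all complexes in $\mathcal{K}(n,r,\beta)$. Then $K$ contains every $r$-element subset of $V(K)$ as an $(r-1)$-face, and $K$ is $(r-1)$-path connected.
   Context: A (finite abstract) simplicial complex $K$ on a finite vertex set $V(K)$ is a family of subsets of $V(K)$ closed under taking subsets and containing every singleton; it is on $n$ vertices if $|V(K)|=n$. An $i$-face is a member of cardinality $i+1$; $S_i(K)$ is the set of $i$-faces; facets are inclusion-maximal faces; $K$ is pure if all facets have the same dimension. For an $i$-face $F$, $d_K(F)$ is the number of $(i+1)$-faces containing $F$. Two distinct $i$-faces are up-neighbors if their union is an $(i+1)$-face. $K$ is $i$-path connected if for any two $i$-faces $F,G$ there is a sequence $F=F_1,\dots,F_m=G$ of $i$-faces in which consecutive terms are up-neighbors. The signless up Laplacian $Q_i^{\mathrm{up}}(K)$ is the operator on $\mathbb{R}^{S_i(K)}$ given by $(Q_i^{\mathrm{up}}(K)f)(F)=d_K(F)f(F)+\sum_{F'\text{ up-neighbor of }F}f(F')$, and $\mathfrak{q}_i(K)$ is its largest eigenvalue (spectral radius). $\beta_r(K)=\dim_{\mathbb R}H_r(K;\mathbb R)$. $\mathcal{K}(n,r,\beta)$ denotes the set of pure $r$-dimensional simplicial complexes on $n$ vertices with $\beta_r=\beta$ ($r\ge 1$). *)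

theory Defs
  imports "HOL-Analysis.Analysis" "HOL-Library.Function_Algebras"
begin

text \<open>Finite abstract simplicial complexes on vertices of type nat (the natural
order on nat fixes the orientation used in the boundary operator).\<close>

definition simplicial_complex :: "nat set set \<Rightarrow> bool" where
  "simplicial_complex K \<longleftrightarrow> finite K \<and> (\<forall>F\<in>K. finite F) \<and>
     (\<forall>F\<in>K. \<forall>G. G \<subseteq> F \<longrightarrow> G \<in> K)"

definition vertices :: "nat set set \<Rightarrow> nat set" where
  "vertices K = \<Union>K"

definition faces :: "nat set set \<Rightarrow> nat \<Rightarrow> nat set set" where
  "faces K i = {F \<in> K. card F = i + 1}"

definition facets :: "nat set set \<Rightarrow> nat set set" where
  "facets K = {F \<in> K. \<not> (\<exists>G\<in>K. F \<subset> G)}"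

definition pure_of_dim :: "nat set set \<Rightarrow> nat \<Rightarrow> bool" where
  "pure_of_dim K r \<longleftrightarrow> facets K \<noteq> {} \<and> (\<forall>F\<in>facets K. card F = r + 1)"

definition chains :: "nat set set \<Rightarrow> nat \<Rightarrow> (nat set \<Rightarrow> real) set" where
  "chains K i = {c. \<forall>F. F \<notin> faces K i \<longrightarrow> c F = 0}"

text \<open>simplicial boundary map from i-chains to (i-1)-chains (zero for i = 0);
the coefficient of G in the boundary of G plus v is (-1)^(position of v)\<close>
definition boundary :: "nat set set \<Rightarrow> nat \<Rightarrow> (nat set \<Rightarrow> real) \<Rightarrow> (nat set \<Rightarrow> real)" where
  "boundary K i c = (\<lambda>G. if 1 \<le> i \<and> G \<in> faces K (i - 1) then
      (\<Sum>v\<in>{v \<in> vertices K - G. insert v G \<in> K}.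
          (-1) ^ card {u \<in> G. u < v} * c (insert v G))
    else 0)"

abbreviation fscale :: "real \<Rightarrow> (nat set \<Rightarrow> real) \<Rightarrow> (nat set \<Rightarrow> real)" where
  "fscale a f \<equiv> (\<lambda>x. a * f x)"

abbreviation rdim :: "(nat set \<Rightarrow> real) set \<Rightarrow> nat" where
  "rdim S \<equiv> vector_space.dim fscale S"

definition betti :: "nat set set \<Rightarrow> nat \<Rightarrow> nat" where
  "betti K i = rdim {c \<in> chains K i. boundary K i c = 0}
             - rdim (boundary K (i + 1) ` chains K (i + 1))"

definition up_degree :: "nat set set \<Rightarrow> nat set \<Rightarrow> nat" where
  "up_degree K F = card {G \<in> K. F \<subseteq> G \<and> card G = card F + 1}"

definition up_neighbors :: "nat set set \<Rightarrow> nat \<Rightarrow> nat set \<Rightarrow> nat set \<Rightarrow> bool" where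
  "up_neighbors K i F G \<longleftrightarrow> F \<in> faces K i \<and> G \<in> faces K i \<and> F \<noteq> G \<and>
      F \<union> G \<in> faces K (i + 1)"

definition signless_up_laplacian :: "nat set set \<Rightarrow> nat \<Rightarrow> (nat set \<Rightarrow> real) \<Rightarrow> (nat set \<Rightarrow> real)" where
  "signless_up_laplacian K i f = (\<lambda>F. if F \<in> faces K i then
      real (up_degree K F) * f F + (\<Sum>G\<in>{G \<in> faces K i. up_neighbors K i F G}. f G)
    else 0)"

definition eigenvalues_Qup :: "nat set set \<Rightarrow> nat \<Rightarrow> real set" where
  "eigenvalues_Qup K i = {mu. \<exists>f \<in> chains K i. f \<noteq> 0 \<and>
      signless_up_laplacian K i f = fscale mu f}"

definition q_spec :: "nat set set \<Rightarrow> nat \<Rightarrow> real" where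
  "q_spec K i = Max (eigenvalues_Qup K i)"

definition path_connected_faces :: "nat set set \<Rightarrow> nat \<Rightarrow> bool" where
  "path_connected_faces K i \<longleftrightarrow> (\<forall>F\<in>faces K i. \<forall>G\<in>faces K i.
      \<exists>xs. xs \<noteq> [] \<and> hd xs = F \<and> last xs = G \<and> set xs \<subseteq> faces K i \<and>
        (\<forall>j. Suc j < length xs \<longrightarrow> up_neighbors K i (xs ! j) (xs ! Suc j)))"

definition cK :: "nat \<Rightarrow> nat \<Rightarrow> nat \<Rightarrow> nat set set set" where
  "cK n r \<beta> = {K. simplicial_complex K \<and> card (vertices K) = n \<and>
      pure_of_dim K r \<and> betti K r = \<beta>}"

end

theory Submission
  imports Defs
begin

(* The signless up Laplacian Q = Q_i^up is the Gram operator B^T B of the 0/1 incidence matrix B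
   between i-faces and (i+1)-faces, so q_i(K) is the maximum of the Rayleigh quotient
   |B f|^2 / |f|^2; replacing f by |f| shows that it is attained by a nonnegative eigenvector f,
   and f is then positive on the whole up-path component of a face where it is positive.

   Let K be a maximizer in K(n, i+1, beta) and suppose some (i+1)-set B of vertices is not reached
   from that component. Take a reached face F with |F - B| minimal, x in F - B and y in B - F.
   Then F - x + y is not reached, hence sigma = F + y is not a face, and adding sigma with all its
   subsets keeps the complex pure of dimension i+1 on the same vertices. It also keeps beta_(i+1):
   pairing an (i+1)-cycle c with the signed sum of the component's faces through the ridge F - x,
   all terms cancel in pairs except the one at sigma, so c vanishes on sigma. But the new face adds
   (sum of f over the i-faces of sigma)^2 > 0 to |B f|^2, so q_i increases, contradicting maximality.
   So every (i+1)-set of vertices is reached from a single component, which gives both claims. *)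

definition vectors_on :: "'a set \<Rightarrow> ('a \<Rightarrow> real) set" where
  "vectors_on S = {g. \<forall>F. F \<notin> S \<longrightarrow> g F = 0}"

lemma vectors_on_add_scaled:
  "g \<in> vectors_on S \<Longrightarrow> h \<in> vectors_on S \<Longrightarrow> (\<lambda>F. g F + c * h F) \<in> vectors_on S"
  unfolding vectors_on_def by simp

lemma vectors_on_scaled: "g \<in> vectors_on S \<Longrightarrow> (\<lambda>F. c * g F) \<in> vectors_on S"
  unfolding vectors_on_def by simp

lemma linear_coeff_eq_0_if_quadratic_nonpos:
  fixes b d :: real
  assumes "\<And>t. t * b + t\<^sup>2 * d \<le> 0"
  shows "b = 0"
proof (rule ccontr)
  assume "b \<noteq> 0"
  define e where "e = 1 / (\<bar>d\<bar> + 1)"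
  have "0 < e" "e * \<bar>d\<bar> < 1"
    unfolding e_def by (auto simp: field_simps)
  moreover have "e * (- d) \<le> e * \<bar>d\<bar>"
    using \<open>0 < e\<close> by (intro mult_left_mono) auto
  ultimately have "0 < 1 + e * d"
    by simp
  moreover have "0 < e * b\<^sup>2"
    using \<open>0 < e\<close> \<open>b \<noteq> 0\<close> by simp
  moreover have "(e * b) * b + (e * b)\<^sup>2 * d = (e * b\<^sup>2) * (1 + e * d)"
    by (simp add: algebra_simps power2_eq_square)
  ultimately show False
    using assms[of "e * b"] by (metis mult_pos_pos not_le)
qed

locale gram_operator =
  fixes S :: "'a set" and T :: "'b set" and a :: "'b \<Rightarrow> 'a \<Rightarrow> real"
  assumes finite_S: "finite S" and finite_T: "finite T"
begin

definition dot :: "('a \<Rightarrow> real) \<Rightarrow> ('a \<Rightarrow> real) \<Rightarrow> real" where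
  "dot g h = (\<Sum>F\<in>S. g F * h F)"

definition apply_at :: "('a \<Rightarrow> real) \<Rightarrow> 'b \<Rightarrow> real" where
  "apply_at g t = (\<Sum>G\<in>S. a t G * g G)"

definition quad :: "('a \<Rightarrow> real) \<Rightarrow> real" where
  "quad g = (\<Sum>t\<in>T. (apply_at g t)\<^sup>2)"

definition gram :: "('a \<Rightarrow> real) \<Rightarrow> 'a \<Rightarrow> real" where
  "gram g = (\<lambda>F. if F \<in> S then \<Sum>t\<in>T. a t F * apply_at g t else 0)"

definition eigenvalues :: "real set" where
  "eigenvalues = {\<mu>. \<exists>g\<in>vectors_on S. g \<noteq> 0 \<and> gram g = (\<lambda>F. \<mu> * g F)}"

lemma dot_cong: "(\<And>F. F \<in> S \<Longrightarrow> g F = h F) \<Longrightarrow> dot g g = dot h h"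
  unfolding dot_def by simp

lemma quad_cong: "(\<And>F. F \<in> S \<Longrightarrow> g F = h F) \<Longrightarrow> quad g = quad h"
  unfolding quad_def apply_at_def by simp

lemma dot_scaled: "dot (\<lambda>F. c * g F) (\<lambda>F. c * g F) = c\<^sup>2 * dot g g"
  unfolding dot_def by (simp add: sum_distrib_left power2_eq_square mult_ac)

lemma dot_commute: "dot g h = dot h g"
  unfolding dot_def by (simp add: mult.commute)

lemma dot_scaled_left: "dot (\<lambda>F. c * g F) h = c * dot g h"
  unfolding dot_def by (simp add: sum_distrib_left mult.assoc)

lemma dot_self_nonneg: "0 \<le> dot g g"
  unfolding dot_def by (simp add: sum_nonneg)

lemma dot_self_eq_0_iff: "g \<in> vectors_on S \<Longrightarrow> dot g g = 0 \<longleftrightarrow> g = 0"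
  unfolding dot_def vectors_on_def
  by (auto simp: sum_nonneg_eq_0_iff finite_S fun_eq_iff)

lemma dot_self_pos: "g \<in> vectors_on S \<Longrightarrow> g \<noteq> 0 \<Longrightarrow> 0 < dot g g"
  using dot_self_eq_0_iff dot_self_nonneg by (simp add: order_less_le)

lemma dot_add_scaled:
  "dot (\<lambda>F. g F + c * h F) (\<lambda>F. g F + c * h F) = dot g g + 2 * c * dot g h + c\<^sup>2 * dot h h"
  unfolding dot_def
  by (simp add: algebra_simps power2_eq_square sum.distrib sum_distrib_left)

lemma dot_add_scaled_left: "dot (\<lambda>F. g F + c * h F) k = dot g k + c * dot h k"
  unfolding dot_def by (simp add: algebra_simps sum.distrib sum_distrib_left)

lemma apply_at_add_scaled: "apply_at (\<lambda>F. g F + c * h F) t = apply_at g t + c * apply_at h t"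
  unfolding apply_at_def by (simp add: algebra_simps sum.distrib sum_distrib_left)

lemma dot_gram: "dot (gram g) h = (\<Sum>t\<in>T. apply_at g t * apply_at h t)"
proof -
  have "dot (gram g) h = (\<Sum>F\<in>S. \<Sum>t\<in>T. apply_at g t * (a t F * h F))"
    unfolding dot_def gram_def by (simp add: sum_distrib_left sum_distrib_right mult_ac)
  also have "\<dots> = (\<Sum>t\<in>T. apply_at g t * apply_at h t)"
    unfolding apply_at_def[of h] by (subst sum.swap) (simp add: sum_distrib_left)
  finally show ?thesis .
qed

lemma dot_gram_commute: "dot (gram g) h = dot (gram h) g"
  unfolding dot_gram by (simp add: mult.commute)

lemma quad_eq_dot_gram: "quad g = dot (gram g) g"
  unfolding quad_def dot_gram by (simp add: power2_eq_square)

lemma quad_eigenvector: "gram g = (\<lambda>F. \<mu> * g F) \<Longrightarrow> quad g = \<mu> * dot g g"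
  by (simp add: quad_eq_dot_gram dot_scaled_left)

lemma quad_add_scaled:
  "quad (\<lambda>F. g F + c * h F) = quad g + 2 * c * dot (gram g) h + c\<^sup>2 * quad h"
  unfolding quad_def dot_gram apply_at_add_scaled
  by (simp add: algebra_simps power2_eq_square sum.distrib sum_distrib_left)

lemma apply_at_scaled: "apply_at (\<lambda>F. c * g F) t = c * apply_at g t"
  unfolding apply_at_def by (simp add: sum_distrib_left mult_ac)

lemma quad_scaled: "quad (\<lambda>F. c * g F) = c\<^sup>2 * quad g"
  unfolding quad_def apply_at_scaled by (simp add: sum_distrib_left power_mult_distrib)

lemma gram_scaled: "gram (\<lambda>F. c * g F) = (\<lambda>F. c * gram g F)"
  by (simp add: gram_def apply_at_scaled sum_distrib_left mult_ac fun_eq_iff)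

lemma gram_in_vectors_on: "gram g \<in> vectors_on S"
  unfolding gram_def vectors_on_def by simp

lemma compact_quad_image_sphere: "compact (quad ` {g \<in> PiE S (\<lambda>_. {-1..1}). dot g g = 1})"
proof -
  define X where "X = product_topology (\<lambda>_. euclideanreal) S"
  have proj: "continuous_map X euclideanreal (\<lambda>g. g F)" if "F \<in> S" for F
    unfolding X_def using that by (auto intro: continuous_map_product_projection)
  have "continuous_map X euclideanreal (\<lambda>g. dot g g)"
    unfolding dot_def by (intro continuous_map_sum continuous_map_real_mult finite_S proj)
  then have closed: "closedin X {g \<in> topspace X. dot g g \<in> {1}}"
    by (rule closedin_continuous_map_preimage) simp
  have cube: "compactin X (PiE S (\<lambda>_. {-1..1}))"
    unfolding X_def by (subst compactin_PiE) simp
  have "{g \<in> PiE S (\<lambda>_. {-1..1}). dot g g = 1} = {g \<in> topspace X. dot g g \<in> {1}} \<inter> PiE S (\<lambda>_. {-1..1})"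
    unfolding X_def topspace_product_topology topspace_euclidean
    using PiE_mono[of S "\<lambda>_. {-1..1}" "\<lambda>_. UNIV"] by blast
  then have "compactin X {g \<in> PiE S (\<lambda>_. {-1..1}). dot g g = 1}"
    using closed_Int_compactin[OF closed cube] by simp
  moreover have "continuous_map X euclideanreal quad"
    unfolding quad_def apply_at_def
    by (intro continuous_map_sum continuous_map_real_pow continuous_map_real_mult
        finite_S finite_T continuous_map_canonical_const proj)
  ultimately have "compactin euclideanreal (quad ` {g \<in> PiE S (\<lambda>_. {-1..1}). dot g g = 1})"
    by (rule image_compactin)
  then show ?thesis by simp
qed

lemma ex_unit_quad_maximizer:
  assumes "S \<noteq> {}"
  shows "\<exists>f\<in>vectors_on S. dot f f = 1 \<and> (\<forall>g\<in>vectors_on S. dot g g = 1 \<longrightarrow> quad g \<le> quad f)"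
proof -
  define Y where "Y = {g \<in> PiE S (\<lambda>_. {-1..1}). dot g g = 1}"
  have restrict_in_Y: "restrict g S \<in> Y" if "dot g g = 1" for g
  proof -
    have "g F \<in> {-1..1}" if "F \<in> S" for F
    proof -
      have "g F * g F \<le> dot g g"
        unfolding dot_def using that finite_S by (intro member_le_sum) auto
      then show ?thesis
        using \<open>dot g g = 1\<close> abs_square_le_1[of "g F"] by (simp add: abs_le_iff power2_eq_square)
    qed
    moreover have "dot (restrict g S) (restrict g S) = dot g g"
      by (rule dot_cong) simp
    ultimately show ?thesis
      unfolding Y_def using \<open>dot g g = 1\<close> by (simp add: restrict_PiE_iff)
  qed
  obtain F0 where "F0 \<in> S" using assms by blast
  then have "dot (\<lambda>F. if F = F0 then 1 else 0) (\<lambda>F. if F = F0 then 1 else 0) = 1"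
    unfolding dot_def by (simp add: finite_S if_distrib[of "\<lambda>x. x * _"] cong: if_cong)
  then have "quad ` Y \<noteq> {}"
    using restrict_in_Y by blast
  then obtain g0 where g0: "g0 \<in> Y" "\<forall>g\<in>Y. quad g \<le> quad g0"
    using compact_attains_sup[OF compact_quad_image_sphere[folded Y_def]] by blast
  define f where "f = (\<lambda>F. if F \<in> S then g0 F else 0)"
  have "f \<in> vectors_on S"
    unfolding f_def vectors_on_def by simp
  moreover have "dot f f = 1"
    using g0(1) dot_cong[of f g0] unfolding Y_def by (simp add: f_def)
  moreover have "quad g \<le> quad f" if "dot g g = 1" for g
  proof -
    have "quad g = quad (restrict g S)" "quad f = quad g0"
      by (rule quad_cong, simp add: f_def)+
    then show ?thesis
      using g0(2) restrict_in_Y[OF that] by simp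
  qed
  ultimately show ?thesis by blast
qed

lemma quad_le_if_unit_bound:
  assumes bound: "\<forall>g\<in>vectors_on S. dot g g = 1 \<longrightarrow> quad g \<le> M" and g: "g \<in> vectors_on S"
  shows "quad g \<le> M * dot g g"
proof (cases "g = 0")
  case True
  then show ?thesis by (simp add: quad_def apply_at_def dot_def)
next
  case False
  define c where "c = 1 / sqrt (dot g g)"
  have "c\<^sup>2 * dot g g = 1"
    using dot_self_pos[OF g False] by (simp add: c_def power_divide)
  moreover have "quad (\<lambda>F. c * g F) \<le> M"
    using bound vectors_on_scaled[OF g, of c] calculation by (simp add: dot_scaled)
  ultimately have "c\<^sup>2 * quad g \<le> c\<^sup>2 * (M * dot g g)"
    by (simp add: quad_scaled mult.left_commute)
  moreover have "0 < c\<^sup>2"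
    using \<open>c\<^sup>2 * dot g g = 1\<close> by (cases "c = 0") auto
  ultimately show ?thesis by simp
qed

lemma gram_eq_if_quad_eq:
  assumes bound: "\<forall>h\<in>vectors_on S. quad h \<le> M * dot h h"
    and g: "g \<in> vectors_on S" and eq: "quad g = M * dot g g"
  shows "gram g = (\<lambda>F. M * g F)"
proof -
  have orth: "dot (gram g) h = M * dot g h" if h: "h \<in> vectors_on S" for h
  proof -
    have "2 * (dot (gram g) h - M * dot g h) = 0"
    proof (rule linear_coeff_eq_0_if_quadratic_nonpos)
      fix t
      have "quad (\<lambda>F. g F + t * h F) \<le> M * dot (\<lambda>F. g F + t * h F) (\<lambda>F. g F + t * h F)"
        using bound vectors_on_add_scaled[OF g h] by blast
      then show "t * (2 * (dot (gram g) h - M * dot g h)) + t\<^sup>2 * (quad h - M * dot h h) \<le> 0"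
        using eq by (simp add: quad_add_scaled dot_add_scaled algebra_simps)
    qed
    then show ?thesis by simp
  qed
  define h where "h = (\<lambda>F. gram g F + (- M) * g F)"
  have h: "h \<in> vectors_on S"
    unfolding h_def using vectors_on_add_scaled[OF gram_in_vectors_on g] .
  have "dot h h = dot (gram g) h + (- M) * dot g h"
    unfolding h_def by (rule dot_add_scaled_left)
  then have "h = 0"
    using orth[OF h] dot_self_eq_0_iff[OF h] by simp
  then show ?thesis unfolding h_def by (simp add: fun_eq_iff)
qed

lemma eigenvectors_orthogonal:
  assumes "gram g = (\<lambda>F. \<mu> * g F)" "gram h = (\<lambda>F. \<nu> * h F)" "\<mu> \<noteq> \<nu>"
  shows "dot g h = 0"
proof -
  have "\<mu> * dot g h = \<nu> * dot g h"
    using dot_gram_commute[of g h] assms(1,2) by (simp add: dot_scaled_left dot_commute)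
  then show ?thesis using assms(3) by simp
qed

lemma card_orthonormal_le:
  assumes "finite A" and unit: "\<And>\<mu>. \<mu> \<in> A \<Longrightarrow> dot (e \<mu>) (e \<mu>) = 1"
    and orth: "\<And>\<mu> \<nu>. \<mu> \<in> A \<Longrightarrow> \<nu> \<in> A \<Longrightarrow> \<mu> \<noteq> \<nu> \<Longrightarrow> dot (e \<mu>) (e \<nu>) = 0"
  shows "card A \<le> card S"
proof -
  have bessel: "(\<Sum>\<mu>\<in>A. (e \<mu> F)\<^sup>2) \<le> 1" if F: "F \<in> S" for F
  proof -
    define d :: "'a \<Rightarrow> real" where "d = (\<lambda>G. if G = F then 1 else 0)"
    define p where "p = (\<lambda>G. \<Sum>\<mu>\<in>A. e \<mu> F * e \<mu> G)"
    have "dot d d = 1" "dot d p = (\<Sum>\<mu>\<in>A. (e \<mu> F)\<^sup>2)"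
      unfolding dot_def d_def p_def using F finite_S
      by (simp_all add: power2_eq_square if_distrib[of "\<lambda>x. x * _"] cong: if_cong)
    moreover have "dot p p = (\<Sum>\<mu>\<in>A. (e \<mu> F)\<^sup>2)"
    proof -
      have "dot p p = (\<Sum>G\<in>S. \<Sum>\<mu>\<in>A. \<Sum>\<nu>\<in>A. e \<mu> F * e \<nu> F * (e \<mu> G * e \<nu> G))"
        unfolding dot_def p_def by (simp add: sum_product mult_ac)
      also have "\<dots> = (\<Sum>\<mu>\<in>A. \<Sum>\<nu>\<in>A. \<Sum>G\<in>S. e \<mu> F * e \<nu> F * (e \<mu> G * e \<nu> G))"
        by (subst sum.swap) (simp add: sum.swap[of _ S])
      also have "\<dots> = (\<Sum>\<mu>\<in>A. \<Sum>\<nu>\<in>A. e \<mu> F * e \<nu> F * dot (e \<mu>) (e \<nu>))"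
        unfolding dot_def by (simp add: sum_distrib_left)
      also have "\<dots> = (\<Sum>\<mu>\<in>A. \<Sum>\<nu>\<in>A. if \<nu> = \<mu> then (e \<mu> F)\<^sup>2 else 0)"
        using unit orth by (intro sum.cong refl) (auto simp: power2_eq_square)
      finally show ?thesis using \<open>finite A\<close> by simp
    qed
    ultimately have "dot (\<lambda>G. d G + (-1) * p G) (\<lambda>G. d G + (-1) * p G) = 1 - (\<Sum>\<mu>\<in>A. (e \<mu> F)\<^sup>2)"
      unfolding dot_add_scaled by simp
    then show ?thesis using dot_self_nonneg[of "\<lambda>G. d G + (-1) * p G"] by simp
  qed
  have "real (card A) = (\<Sum>\<mu>\<in>A. dot (e \<mu>) (e \<mu>))"
    using unit by simp
  also have "\<dots> = (\<Sum>F\<in>S. \<Sum>\<mu>\<in>A. (e \<mu> F)\<^sup>2)"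
    unfolding dot_def by (subst sum.swap) (simp add: power2_eq_square)
  also have "\<dots> \<le> real (card S)"
    using sum_mono[of S _ "\<lambda>_. 1", OF bessel] by simp
  finally show ?thesis by simp
qed

lemma ex_unit_eigenvector:
  assumes "\<mu> \<in> eigenvalues"
  shows "\<exists>e\<in>vectors_on S. dot e e = 1 \<and> gram e = (\<lambda>F. \<mu> * e F)"
proof -
  obtain g where g: "g \<in> vectors_on S" "g \<noteq> 0" "gram g = (\<lambda>F. \<mu> * g F)"
    using assms unfolding eigenvalues_def by blast
  define c where "c = 1 / sqrt (dot g g)"
  have "c\<^sup>2 * dot g g = 1"
    using dot_self_pos[OF g(1,2)] by (simp add: c_def power_divide)
  then show ?thesis
    using vectors_on_scaled[OF g(1), of c] g(3)
    by (intro bexI[of _ "\<lambda>F. c * g F"]) (auto simp: dot_scaled gram_scaled mult_ac)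
qed

lemma finite_eigenvalues: "finite eigenvalues"
proof (rule ccontr)
  assume "infinite eigenvalues"
  then obtain A where A: "finite A" "card A = Suc (card S)" "A \<subseteq> eigenvalues"
    using infinite_arbitrarily_large by blast
  then have "\<forall>\<mu>\<in>A. \<exists>e. dot e e = 1 \<and> gram e = (\<lambda>F. \<mu> * e F)"
    using ex_unit_eigenvector by blast
  then obtain e where e: "\<And>\<mu>. \<mu> \<in> A \<Longrightarrow> dot (e \<mu>) (e \<mu>) = 1 \<and> gram (e \<mu>) = (\<lambda>F. \<mu> * e \<mu> F)"
    by metis
  have "card A \<le> card S"
    using e by (intro card_orthonormal_le[OF A(1)]) (auto intro: eigenvectors_orthogonal)
  then show False using A(2) by simp
qed

lemma eigenvalue_le_if_quad_bound:
  assumes "\<mu> \<in> eigenvalues" and bound: "\<forall>g\<in>vectors_on S. quad g \<le> M * dot g g"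
  shows "\<mu> \<le> M"
proof -
  obtain g where g: "g \<in> vectors_on S" "g \<noteq> 0" "gram g = (\<lambda>F. \<mu> * g F)"
    using assms(1) unfolding eigenvalues_def by blast
  then have "\<mu> * dot g g \<le> M * dot g g"
    using bound quad_eigenvector by metis
  then show ?thesis using dot_self_pos[OF g(1,2)] by simp
qed

lemma Max_eigenvalue:
  assumes "S \<noteq> {}"
  shows "Max eigenvalues \<in> eigenvalues" and "\<forall>g\<in>vectors_on S. quad g \<le> Max eigenvalues * dot g g"
proof -
  obtain f where f: "f \<in> vectors_on S" "dot f f = 1"
    and max: "\<forall>g\<in>vectors_on S. dot g g = 1 \<longrightarrow> quad g \<le> quad f"
    using ex_unit_quad_maximizer[OF assms] by blast
  have bound: "\<forall>g\<in>vectors_on S. quad g \<le> quad f * dot g g"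
    using quad_le_if_unit_bound max by blast
  have "f \<noteq> 0" using f(2) by (auto simp: dot_def)
  then have "quad f \<in> eigenvalues"
    using gram_eq_if_quad_eq[OF bound f(1)] f unfolding eigenvalues_def by auto
  moreover have "Max eigenvalues = quad f"
    using calculation finite_eigenvalues eigenvalue_le_if_quad_bound[OF _ bound]
    by (intro Max_eqI) auto
  ultimately show "Max eigenvalues \<in> eigenvalues" and "\<forall>g\<in>vectors_on S. quad g \<le> Max eigenvalues * dot g g"
    using bound by simp_all
qed

lemma ex_nonneg_Max_eigenvector:
  assumes "S \<noteq> {}" and nonneg: "\<And>t G. 0 \<le> a t G"
  shows "\<exists>f\<in>vectors_on S. f \<noteq> 0 \<and> (\<forall>F. 0 \<le> f F) \<and> gram f = (\<lambda>F. Max eigenvalues * f F)"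
proof -
  let ?M = "Max eigenvalues"
  obtain g where g: "g \<in> vectors_on S" "g \<noteq> 0" "gram g = (\<lambda>F. ?M * g F)"
    using Max_eigenvalue(1)[OF assms(1)] unfolding eigenvalues_def by blast
  define f where "f = (\<lambda>F. \<bar>g F\<bar>)"
  have f: "f \<in> vectors_on S" "f \<noteq> 0"
    using g(1,2) by (auto simp: f_def vectors_on_def fun_eq_iff)
  have "(apply_at g t)\<^sup>2 \<le> (apply_at f t)\<^sup>2" for t
  proof -
    have "\<bar>apply_at g t\<bar> \<le> apply_at f t"
      unfolding apply_at_def f_def
      using sum_abs[of "\<lambda>G. a t G * g G" S] by (simp add: abs_mult nonneg)
    then show ?thesis using power_mono[of "\<bar>apply_at g t\<bar>" _ 2] by simp
  qed
  then have "quad g \<le> quad f"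
    unfolding quad_def by (rule sum_mono)
  moreover have "quad g = ?M * dot f f"
    using quad_eigenvector[OF g(3)] unfolding dot_def f_def by (simp add: abs_mult_self_eq)
  moreover have "quad f \<le> ?M * dot f f"
    using Max_eigenvalue(2)[OF assms(1)] f(1) by blast
  ultimately have "quad f = ?M * dot f f"
    by linarith
  then have "gram f = (\<lambda>F. ?M * f F)"
    using gram_eq_if_quad_eq Max_eigenvalue(2)[OF assms(1)] f(1) by blast
  moreover have "\<forall>F. 0 \<le> f F" by (simp add: f_def)
  ultimately show ?thesis using f by blast
qed

lemma quad_dot_insert_row:
  assumes "finite S'" "S \<subseteq> S'" "t \<notin> T" "g \<in> vectors_on S"
  shows "gram_operator.quad S' (insert t T) a g = (apply_at g t)\<^sup>2 + quad g"
    and "gram_operator.dot S' g g = dot g g"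
proof -
  interpret E: gram_operator S' "insert t T" a
    using assms(1) finite_T by unfold_locales simp_all
  have zero: "\<forall>F\<in>S' - S. g F = 0"
    using assms(4) unfolding vectors_on_def by blast
  have "E.apply_at g u = apply_at g u" for u
    unfolding E.apply_at_def apply_at_def using zero
    by (intro sum.mono_neutral_right[OF assms(1,2)]) auto
  then show "E.quad g = (apply_at g t)\<^sup>2 + quad g"
    unfolding E.quad_def quad_def using assms(3) finite_T by simp
  show "E.dot g g = dot g g"
    unfolding E.dot_def dot_def using zero by (intro sum.mono_neutral_right[OF assms(1,2)]) auto
qed

end

lemma faces_card: "F \<in> faces K i \<Longrightarrow> finite F \<and> card F = Suc i"
  unfolding faces_def using card_ge_0_finite by force

lemma faces_subset_vertices: "F \<in> faces K i \<Longrightarrow> F \<subseteq> vertices K"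
  unfolding faces_def vertices_def by auto

lemma finite_faces: "simplicial_complex K \<Longrightarrow> finite (faces K i)"
  unfolding faces_def simplicial_complex_def by auto

lemma simplicial_complex_subset: "simplicial_complex K \<Longrightarrow> F \<in> K \<Longrightarrow> G \<subseteq> F \<Longrightarrow> G \<in> K"
  unfolding simplicial_complex_def by blast

lemma chains_eq_vectors_on: "chains K i = vectors_on (faces K i)"
  unfolding chains_def vectors_on_def ..

lemma symp_up_neighbors: "symp (up_neighbors K i)"
  unfolding up_neighbors_def by (auto intro: sympI simp: Un_commute)

lemma up_degree_eq: "F \<in> faces K i \<Longrightarrow> up_degree K F = card {t \<in> faces K (Suc i). F \<subseteq> t}"
  unfolding up_degree_def faces_def by (auto intro: arg_cong[where f = card])

lemma common_cofaces:
  assumes F: "F \<in> faces K i" and G: "G \<in> faces K i" and "F \<noteq> G"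
  shows "{t \<in> faces K (Suc i). F \<subseteq> t \<and> G \<subseteq> t} = (if up_neighbors K i F G then {F \<union> G} else {})"
proof -
  have "\<not> G \<subseteq> F"
  proof
    assume "G \<subseteq> F"
    then have "G = F"
      using faces_card[OF F] faces_card[OF G] by (intro card_subset_eq) simp_all
    then show False using \<open>F \<noteq> G\<close> by simp
  qed
  then have "card F < card (F \<union> G)"
    using faces_card[OF F] faces_card[OF G] by (intro psubset_card_mono) auto
  have unique: "t = F \<union> G" if t: "t \<in> faces K (Suc i)" "F \<union> G \<subseteq> t" for t
  proof -
    have "finite t" "card t = Suc (Suc i)"
      using faces_card[OF t(1)] by simp_all
    moreover have "card (F \<union> G) \<le> card t"
      using \<open>finite t\<close> t(2) by (rule card_mono)
    ultimately have "card (F \<union> G) = card t"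
      using faces_card[OF F] \<open>card F < card (F \<union> G)\<close> by simp
    then show ?thesis
      using card_subset_eq[OF \<open>finite t\<close> t(2)] by simp
  qed
  show ?thesis
  proof (cases "F \<union> G \<in> faces K (Suc i)")
    case True
    then have "up_neighbors K i F G"
      unfolding up_neighbors_def using F G \<open>F \<noteq> G\<close> by simp
    moreover have "{t \<in> faces K (Suc i). F \<subseteq> t \<and> G \<subseteq> t} = {F \<union> G}"
      using True unique by blast
    ultimately show ?thesis by simp
  next
    case False
    then have "\<not> up_neighbors K i F G"
      unfolding up_neighbors_def by simp
    moreover have "{t \<in> faces K (Suc i). F \<subseteq> t \<and> G \<subseteq> t} = {}"
      using False unique by blast
    ultimately show ?thesis by simp
  qed
qed

definition incidence :: "nat set \<Rightarrow> nat set \<Rightarrow> real" where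
  "incidence t G = (if G \<subseteq> t then 1 else 0)"

lemma gram_operator_faces:
  "simplicial_complex K \<Longrightarrow> gram_operator (faces K i) (faces K (Suc i))"
  by unfold_locales (simp_all add: finite_faces)

lemma gram_incidence:
  assumes "simplicial_complex K" "F \<in> faces K i"
  shows "gram_operator.gram (faces K i) (faces K (Suc i)) incidence g F
    = (\<Sum>G\<in>faces K i. g G * card {t \<in> faces K (Suc i). F \<subseteq> t \<and> G \<subseteq> t})"
proof -
  interpret Q: gram_operator "faces K i" "faces K (Suc i)" incidence
    using assms(1) by (rule gram_operator_faces)
  have count: "(\<Sum>t\<in>faces K (Suc i). incidence t F * incidence t G * g G)
      = g G * card {t \<in> faces K (Suc i). F \<subseteq> t \<and> G \<subseteq> t}" for G
  proof -
    have "(\<Sum>t\<in>faces K (Suc i). incidence t F * incidence t G * g G)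
        = (\<Sum>t\<in>{t \<in> faces K (Suc i). F \<subseteq> t \<and> G \<subseteq> t}. g G)"
      unfolding sum.inter_filter[OF Q.finite_T] by (rule sum.cong) (auto simp: incidence_def)
    then show ?thesis by simp
  qed
  have "Q.gram g F = (\<Sum>t\<in>faces K (Suc i). \<Sum>G\<in>faces K i. incidence t F * incidence t G * g G)"
    using assms(2) unfolding Q.gram_def Q.apply_at_def by (simp add: sum_distrib_left mult.assoc)
  also have "\<dots> = (\<Sum>G\<in>faces K i. g G * card {t \<in> faces K (Suc i). F \<subseteq> t \<and> G \<subseteq> t})"
    by (subst sum.swap) (simp add: count)
  finally show ?thesis .
qed

lemma signless_up_laplacian_eq_gram:
  assumes "simplicial_complex K"
  shows "signless_up_laplacian K i g = gram_operator.gram (faces K i) (faces K (Suc i)) incidence g"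
proof
  fix F
  let ?S = "faces K i"
  let ?common = "\<lambda>G. card {t \<in> faces K (Suc i). F \<subseteq> t \<and> G \<subseteq> t}"
  show "signless_up_laplacian K i g F = gram_operator.gram ?S (faces K (Suc i)) incidence g F"
  proof (cases "F \<in> ?S")
    case False
    then show ?thesis
      unfolding signless_up_laplacian_def gram_operator.gram_def[OF gram_operator_faces[OF assms]]
      by simp
  next
    case F: True
    have neighbors: "g G * ?common G = (if up_neighbors K i F G then g G else 0)"
      if "G \<in> ?S - {F}" for G
    proof -
      have "G \<in> ?S" "F \<noteq> G" using that by auto
      then have "?common G = (if up_neighbors K i F G then 1 else 0)"
        using common_cofaces[OF F] by simp
      then show ?thesis by simp
    qed
    have "{G \<in> ?S - {F}. up_neighbors K i F G} = {G \<in> ?S. up_neighbors K i F G}"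
      unfolding up_neighbors_def by auto
    then have "(\<Sum>G\<in>?S - {F}. g G * ?common G) = (\<Sum>G\<in>{G \<in> ?S. up_neighbors K i F G}. g G)"
      using neighbors sum.inter_filter[of "?S - {F}" g "up_neighbors K i F"] finite_faces[OF assms]
      by simp
    moreover have "(\<Sum>G\<in>?S. g G * ?common G) = g F * ?common F + (\<Sum>G\<in>?S - {F}. g G * ?common G)"
      using F finite_faces[OF assms] by (simp add: sum.remove)
    ultimately show ?thesis
      using F up_degree_eq[OF F] gram_incidence[OF assms F]
      unfolding signless_up_laplacian_def by (simp add: mult.commute)
  qed
qed

lemma q_spec_eq_Max_eigenvalues:
  assumes "simplicial_complex K"
  shows "q_spec K i = Max (gram_operator.eigenvalues (faces K i) (faces K (Suc i)) incidence)"
  unfolding q_spec_def eigenvalues_Qup_def gram_operator.eigenvalues_def[OF gram_operator_faces[OF assms]]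
    chains_eq_vectors_on signless_up_laplacian_eq_gram[OF assms] ..

lemma quad_le_q_spec:
  assumes "simplicial_complex K" "faces K i \<noteq> {}" "g \<in> chains K i"
  shows "gram_operator.quad (faces K i) (faces K (Suc i)) incidence g
    \<le> q_spec K i * gram_operator.dot (faces K i) g g"
  using gram_operator.Max_eigenvalue(2)[OF gram_operator_faces[OF assms(1)] assms(2)] assms(3)
  by (simp add: q_spec_eq_Max_eigenvalues[OF assms(1)] chains_eq_vectors_on)

lemma ex_nonneg_q_spec_eigenvector:
  assumes "simplicial_complex K" "faces K i \<noteq> {}"
  shows "\<exists>f\<in>chains K i. f \<noteq> 0 \<and> (\<forall>F. 0 \<le> f F) \<and>
    signless_up_laplacian K i f = (\<lambda>F. q_spec K i * f F)"
  using gram_operator.ex_nonneg_Max_eigenvector[OF gram_operator_faces[OF assms(1)] assms(2)]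
  by (simp add: incidence_def q_spec_eq_Max_eigenvalues[OF assms(1)] chains_eq_vectors_on
      signless_up_laplacian_eq_gram[OF assms(1)])

lemma eigenvector_pos_if_up_neighbor:
  assumes "simplicial_complex K" and nonneg: "\<forall>F. 0 \<le> f F"
    and eigen: "signless_up_laplacian K i f = (\<lambda>F. \<mu> * f F)"
    and "0 < f G" and "up_neighbors K i G H"
  shows "0 < f H"
proof -
  have H: "H \<in> faces K i" and "G \<in> {G' \<in> faces K i. up_neighbors K i H G'}"
    using \<open>up_neighbors K i G H\<close> sympD[OF symp_up_neighbors] unfolding up_neighbors_def by blast+
  then have "f G \<le> (\<Sum>G'\<in>{G' \<in> faces K i. up_neighbors K i H G'}. f G')"
    using nonneg finite_faces[OF assms(1)] by (intro member_le_sum) auto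
  then have "f G \<le> signless_up_laplacian K i f H"
    using H nonneg unfolding signless_up_laplacian_def by (simp add: add_increasing)
  then have "0 < \<mu> * f H"
    using eigen \<open>0 < f G\<close> by (simp add: fun_eq_iff)
  then show ?thesis
    using nonneg by (metis mult_zero_right order_less_le)
qed

lemma eigenvector_pos_if_rtranclp:
  assumes "simplicial_complex K" "\<forall>F. 0 \<le> f F"
    "signless_up_laplacian K i f = (\<lambda>F. \<mu> * f F)"
    and "(up_neighbors K i)\<^sup>*\<^sup>* G H" "0 < f G"
  shows "0 < f H"
  using assms(4,5) by induction (use eigenvector_pos_if_up_neighbor[OF assms(1-3)] in blast)+

lemma rtranclp_up_neighbors_faces:
  "(up_neighbors K i)\<^sup>*\<^sup>* F G \<Longrightarrow> F \<in> faces K i \<Longrightarrow> G \<in> faces K i"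
  by (induction rule: rtranclp_induct) (auto simp: up_neighbors_def)

lemma up_path_if_rtranclp:
  assumes "(up_neighbors K i)\<^sup>*\<^sup>* F G" "F \<in> faces K i"
  shows "\<exists>xs. xs \<noteq> [] \<and> hd xs = F \<and> last xs = G \<and> set xs \<subseteq> faces K i \<and>
    (\<forall>j. Suc j < length xs \<longrightarrow> up_neighbors K i (xs ! j) (xs ! Suc j))"
  using assms(1)
proof (induction rule: rtranclp_induct)
  case base
  then show ?case using assms(2) by (intro exI[of _ "[F]"]) simp
next
  case (step G H)
  then obtain xs where xs: "xs \<noteq> []" "hd xs = F" "last xs = G" "set xs \<subseteq> faces K i"
    "\<forall>j. Suc j < length xs \<longrightarrow> up_neighbors K i (xs ! j) (xs ! Suc j)"
    by blast
  have "xs ! (length xs - 1) = G"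
    using xs(1,3) by (simp add: last_conv_nth)
  have "up_neighbors K i ((xs @ [H]) ! j) ((xs @ [H]) ! Suc j)"
    if "Suc j < length (xs @ [H])" for j
  proof (cases "Suc j < length xs")
    case True
    then show ?thesis using xs(5) by (simp add: nth_append)
  next
    case False
    then have "j = length xs - 1" using that by simp
    then show ?thesis
      using \<open>xs ! (length xs - 1) = G\<close> step(2) xs(1) by (simp add: nth_append)
  qed
  moreover have "H \<in> faces K i"
    using step(2) unfolding up_neighbors_def by simp
  ultimately show ?case
    using xs by (intro exI[of _ "xs @ [H]"]) auto
qed

lemma path_connected_facesI:
  assumes "\<And>F G. F \<in> faces K i \<Longrightarrow> G \<in> faces K i \<Longrightarrow> (up_neighbors K i)\<^sup>*\<^sup>* F G"
  shows "path_connected_faces K i"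
  unfolding path_connected_faces_def using assms up_path_if_rtranclp by blast

lemma simplicial_complex_Un_Pow:
  assumes "simplicial_complex K" "finite \<sigma>"
  shows "simplicial_complex (K \<union> Pow \<sigma>)"
  using assms unfolding simplicial_complex_def by (auto intro: finite_subset)

lemma faces_Un_Pow_top:
  assumes "card \<sigma> = Suc (Suc i)"
  shows "faces (K \<union> Pow \<sigma>) (Suc i) = insert \<sigma> (faces K (Suc i))"
proof -
  have "finite \<sigma>" using assms card_ge_0_finite by force
  then have "G = \<sigma>" if "G \<subseteq> \<sigma>" "card G = Suc (Suc i)" for G
    using that assms card_subset_eq by metis
  then show ?thesis unfolding faces_def using assms by auto
qed

lemma eigenvalue_less_q_spec_add_simplex:
  assumes K: "simplicial_complex K" and f: "f \<in> chains K i" "\<forall>G. 0 \<le> f G"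
    and eigen: "signless_up_laplacian K i f = (\<lambda>G. \<mu> * f G)"
    and F: "F \<in> faces K i" "0 < f F"
    and \<sigma>: "F \<subseteq> \<sigma>" "card \<sigma> = Suc (Suc i)" "\<sigma> \<notin> K"
  shows "\<mu> < q_spec (K \<union> Pow \<sigma>) i"
proof -
  define K' where "K' = K \<union> Pow \<sigma>"
  have K': "simplicial_complex K'"
    unfolding K'_def using K \<sigma>(2) card_ge_0_finite
    by (intro simplicial_complex_Un_Pow) force+
  interpret Q: gram_operator "faces K i" "faces K (Suc i)" incidence
    using K by (rule gram_operator_faces)
  have S: "faces K i \<subseteq> faces K' i"
    unfolding K'_def faces_def by auto
  have T: "faces K' (Suc i) = insert \<sigma> (faces K (Suc i))" "\<sigma> \<notin> faces K (Suc i)"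
    unfolding K'_def using faces_Un_Pow_top[OF \<sigma>(2)] \<sigma>(3) by (auto simp: faces_def)
  have f': "f \<in> vectors_on (faces K i)"
    using f(1) by (simp add: chains_eq_vectors_on)
  have "faces K' i \<noteq> {}" "f \<in> chains K' i"
    using S F(1) f(1) unfolding chains_def by auto
  then have "gram_operator.quad (faces K' i) (faces K' (Suc i)) incidence f
      \<le> q_spec K' i * gram_operator.dot (faces K' i) f f"
    by (rule quad_le_q_spec[OF K'])
  then have "(Q.apply_at f \<sigma>)\<^sup>2 + Q.quad f \<le> q_spec K' i * Q.dot f f"
    unfolding T(1) Q.quad_dot_insert_row[OF finite_faces[OF K'] S T(2) f'] .
  moreover have "incidence \<sigma> F * f F \<le> (\<Sum>G\<in>faces K i. incidence \<sigma> G * f G)"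
    using F(1) f(2) Q.finite_S by (intro member_le_sum) (auto simp: incidence_def)
  then have "f F \<le> Q.apply_at f \<sigma>"
    unfolding Q.apply_at_def using \<sigma>(1) by (simp add: incidence_def)
  then have "0 < (Q.apply_at f \<sigma>)\<^sup>2"
    using F(2) by simp
  moreover have "Q.quad f = \<mu> * Q.dot f f"
    using eigen unfolding signless_up_laplacian_eq_gram[OF K] by (rule Q.quad_eigenvector)
  moreover have "0 < Q.dot f f"
    using F(2) f' by (intro Q.dot_self_pos) auto
  ultimately have "\<mu> * Q.dot f f < q_spec K' i * Q.dot f f"
    by linarith
  then show ?thesis
    unfolding K'_def using \<open>0 < Q.dot f f\<close> by simp
qed

lemma card_le_if_pure:
  assumes K: "simplicial_complex K" and "pure_of_dim K d" "G \<in> K"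
  shows "card G \<le> Suc d"
proof -
  have "finite {M \<in> K. G \<subseteq> M}"
    using K unfolding simplicial_complex_def by simp
  then obtain M where M: "M \<in> K" "G \<subseteq> M" and max: "\<forall>M'\<in>K. G \<subseteq> M' \<longrightarrow> M \<subseteq> M' \<longrightarrow> M = M'"
    using finite_has_maximal2[of "{M \<in> K. G \<subseteq> M}" G] \<open>G \<in> K\<close> by auto
  have "M \<in> facets K"
    unfolding facets_def using M max by auto
  then have "card M = Suc d"
    using assms(2) unfolding pure_of_dim_def by simp
  moreover have "finite M"
    using K M(1) unfolding simplicial_complex_def by simp
  ultimately show ?thesis
    using card_mono[OF \<open>finite M\<close> M(2)] by simp
qed

lemma faces_above_pure_empty:
  assumes "simplicial_complex K" "pure_of_dim K d"
  shows "faces K (Suc d) = {}"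
proof -
  have "card G \<noteq> Suc (Suc d)" if "G \<in> K" for G
    using card_le_if_pure[OF assms that] by simp
  then show ?thesis
    unfolding faces_def by auto
qed

lemma faces_nonempty_if_pure:
  assumes "simplicial_complex K" "pure_of_dim K (Suc i)"
  shows "faces K i \<noteq> {}"
proof -
  obtain M where "M \<in> facets K"
    using assms(2) unfolding pure_of_dim_def by blast
  then have "M \<in> K" "Suc i \<le> card M"
    using assms(2) unfolding facets_def pure_of_dim_def by auto
  then obtain G where "G \<subseteq> M" "card G = Suc i"
    using obtain_subset_with_card_n by metis
  then have "G \<in> faces K i"
    using simplicial_complex_subset[OF assms(1) \<open>M \<in> K\<close>] unfolding faces_def by simp
  then show ?thesis by blast
qed

lemma boundary_image_if_no_faces:
  assumes "faces K j = {}"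
  shows "boundary K j ` chains K j = {0}"
proof -
  have "chains K j = {0}"
    unfolding chains_def assms by auto
  then show ?thesis
    unfolding boundary_def by (auto simp: fun_eq_iff)
qed

definition boundary_sign :: "nat \<Rightarrow> nat set \<Rightarrow> real" where
  "boundary_sign v G = (-1) ^ card {u \<in> G. u < v}"

lemma boundary_Suc:
  "boundary K (Suc j) c G = (if G \<in> faces K j then
     (\<Sum>v\<in>{v \<in> vertices K - G. insert v G \<in> K}. boundary_sign v G * c (insert v G)) else 0)"
  unfolding boundary_def boundary_sign_def by simp

lemma boundary_sign_swap:
  assumes "w \<notin> H" "v \<notin> H" "w \<noteq> v"
  shows "boundary_sign w H * boundary_sign v (insert w H)
    = - (boundary_sign v H * boundary_sign w (insert v H))"
proof -
  have fin: "finite {u \<in> H. u < z}" for z :: nat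
    by (rule finite_subset[of _ "{..<z}"]) auto
  show ?thesis
  proof (cases "w < v")
    case True
    then have "{u \<in> insert w H. u < v} = insert w {u \<in> H. u < v}" "{u \<in> insert v H. u < w} = {u \<in> H. u < w}"
      by auto
    then show ?thesis
      unfolding boundary_sign_def using fin assms(1) by simp
  next
    case False
    then have "{u \<in> insert v H. u < w} = insert v {u \<in> H. u < w}" "{u \<in> insert w H. u < v} = {u \<in> H. u < v}"
      using assms(3) by auto
    then show ?thesis
      unfolding boundary_sign_def using fin assms(2) by simp
  qed
qed

lemma boundary_supercomplex:
  assumes K: "simplicial_complex K" and "K \<subseteq> K'" "vertices K' = vertices K"
    and c: "c \<in> chains K (Suc j)"
  shows "boundary K' (Suc j) c = boundary K (Suc j) c"
proof
  fix G
  have zero: "c (insert v G) = 0" if "insert v G \<notin> K" for v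
    using c that unfolding chains_def faces_def by simp
  have sum_eq: "(\<Sum>v\<in>{v \<in> vertices K - G. insert v G \<in> K'}. boundary_sign v G * c (insert v G))
      = (\<Sum>v\<in>{v \<in> vertices K - G. insert v G \<in> K}. boundary_sign v G * c (insert v G))"
    using \<open>K \<subseteq> K'\<close> zero finite_Union K unfolding simplicial_complex_def vertices_def
    by (intro sum.mono_neutral_right) auto
  show "boundary K' (Suc j) c G = boundary K (Suc j) c G"
  proof (cases "G \<in> K")
    case True
    then show ?thesis
      using sum_eq unfolding boundary_Suc \<open>vertices K' = vertices K\<close> using \<open>K \<subseteq> K'\<close>
      by (auto simp: faces_def)
  next
    case False
    then have "{v \<in> vertices K - G. insert v G \<in> K} = {}"
      using K unfolding simplicial_complex_def by blast
    then have "(\<Sum>v\<in>{v \<in> vertices K - G. insert v G \<in> K'}. boundary_sign v G * c (insert v G)) = 0"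
      using sum_eq by (simp only: sum.empty)
    then show ?thesis
      using False unfolding boundary_Suc \<open>vertices K' = vertices K\<close> by (simp add: faces_def)
  qed
qed

lemma sum_swap_antisymmetric:
  fixes t :: "'a \<times> 'a \<Rightarrow> real"
  assumes "\<And>p. p \<in> D \<Longrightarrow> prod.swap p \<in> D \<Longrightarrow> t (prod.swap p) = - t p"
  shows "(\<Sum>p\<in>{p \<in> D. prod.swap p \<in> D}. t p) = 0"
proof -
  have "(\<Sum>p\<in>{p \<in> D. prod.swap p \<in> D}. t p) = (\<Sum>p\<in>{p \<in> D. prod.swap p \<in> D}. - t p)"
    using assms by (intro sum.reindex_bij_witness[of _ prod.swap prod.swap]) auto
  then show ?thesis by (simp add: sum_negf)
qed

locale new_facet =
  fixes K :: "nat set set" and i :: nat and C :: "nat set set" and F :: "nat set" and x y :: nat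
  assumes complex: "simplicial_complex K" and pure: "pure_of_dim K (Suc i)"
    and C_faces: "C \<subseteq> faces K i"
    and C_closed: "\<And>G H. G \<in> C \<Longrightarrow> up_neighbors K i G H \<Longrightarrow> H \<in> C"
    and F_in_C: "F \<in> C" and x_in_F: "x \<in> F"
    and y_notin_F: "y \<notin> F" and y_vertex: "y \<in> vertices K"
    and exchange_notin_C: "insert y (F - {x}) \<notin> C"
begin

abbreviation \<sigma> :: "nat set" where "\<sigma> \<equiv> insert y F"

abbreviation K' :: "nat set set" where "K' \<equiv> K \<union> Pow \<sigma>"

abbreviation ridge :: "nat set" where "ridge \<equiv> F - {x}"

lemma F_face: "F \<in> faces K i"
  using C_faces F_in_C by blast

lemma card_F: "finite F" "card F = Suc i"
  using faces_card[OF F_face] by simp_all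

lemma card_\<sigma>: "card \<sigma> = Suc (Suc i)"
  using card_F y_notin_F by simp

lemma ridge: "finite ridge" "card ridge = i" "x \<notin> ridge" "insert x ridge = F"
  using card_F x_in_F by auto

lemma exchange_in_C:
  assumes "insert w ridge \<in> C" "w \<notin> ridge" "v \<notin> insert w ridge" "insert v (insert w ridge) \<in> K"
  shows "insert v ridge \<in> C"
proof -
  have "card (insert v (insert w ridge)) = Suc (Suc i)" "card (insert v ridge) = Suc i"
    using ridge assms(2,3) by simp_all
  moreover have "insert v ridge \<in> K"
    by (rule simplicial_complex_subset[OF complex assms(4)]) auto
  ultimately have "insert v (insert w ridge) \<in> faces K (Suc i)" "insert v ridge \<in> faces K i"
    using assms(4) unfolding faces_def by simp_all
  moreover have "insert w ridge \<in> faces K i" "insert w ridge \<noteq> insert v ridge"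
    using C_faces assms(1-3) by auto
  ultimately have "up_neighbors K i (insert w ridge) (insert v ridge)"
    unfolding up_neighbors_def by (simp add: insert_commute)
  then show ?thesis
    using C_closed assms(1) by blast
qed

lemma \<sigma>_notin_K: "\<sigma> \<notin> K"
  using exchange_in_C[of x y, unfolded ridge(4), OF F_in_C ridge(3) y_notin_F] exchange_notin_C
  by blast

lemma complex': "simplicial_complex K'"
  using complex card_F by (intro simplicial_complex_Un_Pow) simp_all

lemma vertices': "vertices K' = vertices K"
  using faces_subset_vertices[OF F_face] y_vertex unfolding vertices_def by auto

lemma card_le': "G \<in> K' \<Longrightarrow> card G \<le> Suc (Suc i)"
  using card_le_if_pure[OF complex pure] card_mono[of \<sigma>] card_F card_\<sigma> by fastforce

lemma pure': "pure_of_dim K' (Suc i)"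
  unfolding pure_of_dim_def
proof (intro conjI ballI)
  have "\<not> \<sigma> \<subset> G" if "G \<in> K'" for G
  proof
    assume "\<sigma> \<subset> G"
    have "finite G"
      using complex' that unfolding simplicial_complex_def by blast
    then have "card \<sigma> < card G"
      using \<open>\<sigma> \<subset> G\<close> by (rule psubset_card_mono)
    then show False
      using card_le'[OF that] card_\<sigma> by simp
  qed
  then have "\<sigma> \<in> facets K'"
    unfolding facets_def by blast
  then show "facets K' \<noteq> {}" by blast
next
  fix G assume "G \<in> facets K'"
  then have G: "G \<in> K'" "\<forall>G'\<in>K'. \<not> G \<subset> G'"
    unfolding facets_def by auto
  show "card G = Suc i + 1"
  proof (cases "G \<subseteq> \<sigma>")
    case True
    then have "G = \<sigma>" using G(2) by blast
    then show ?thesis using card_\<sigma> by simp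
  next
    case False
    then have "G \<in> facets K"
      using G unfolding facets_def by blast
    then show ?thesis using pure unfolding pure_of_dim_def by blast
  qed
qed

lemma chains_K_iff: "c \<in> chains K (Suc i) \<longleftrightarrow> c \<in> chains K' (Suc i) \<and> c \<sigma> = 0"
  using faces_Un_Pow_top[OF card_\<sigma>, of K] \<sigma>_notin_K
  unfolding chains_def by (auto simp: faces_def)

(* Pairing a cycle c of K' with the cochain that puts boundary_sign w ridge on each face
   insert w ridge of C gives one term of c for each pair in apex_pairs. The terms of a pair and
   of its swap cancel, and only (x, y), whose face is \<sigma>, has no partner. *)

definition apexes :: "nat set" where
  "apexes = {w \<in> vertices K - ridge. insert w ridge \<in> C}"

definition coapexes :: "nat \<Rightarrow> nat set" where
  "coapexes w = {v \<in> vertices K - insert w ridge. insert v (insert w ridge) \<in> K'}"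

abbreviation apex_pairs :: "(nat \<times> nat) set" where
  "apex_pairs \<equiv> Sigma apexes coapexes"

lemma unpaired_apex_pairs:
  "apex_pairs - {p \<in> apex_pairs. prod.swap p \<in> apex_pairs} = {(x, y)}"
proof (intro equalityI subsetI)
  fix p assume p: "p \<in> apex_pairs - {p \<in> apex_pairs. prod.swap p \<in> apex_pairs}"
  obtain w v where pw: "p = (w, v)" by (cases p)
  have w: "w \<in> vertices K" "w \<notin> ridge" "insert w ridge \<in> C"
    and v: "v \<in> vertices K" "v \<notin> insert w ridge" "insert v (insert w ridge) \<in> K'"
    and not_swapped: "(v, w) \<notin> apex_pairs"
    using p unfolding pw apexes_def coapexes_def by auto
  have "insert v ridge \<notin> C"
  proof
    assume "insert v ridge \<in> C"
    then have "(v, w) \<in> apex_pairs"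
      using w v unfolding apexes_def coapexes_def by (auto simp: insert_commute)
    with not_swapped show False ..
  qed
  then have "insert v (insert w ridge) \<notin> K"
    using exchange_in_C[OF w(3) w(2) v(2)] by blast
  then have "insert v (insert w ridge) \<subseteq> \<sigma>"
    using v(3) by blast
  then have sub: "insert v (insert w ridge) \<subseteq> insert y (insert x ridge)"
    by (simp only: ridge(4))
  moreover have "card (insert v (insert w ridge)) = card (insert y (insert x ridge))"
    using ridge card_\<sigma> w(2) v(2) by simp
  ultimately have eq: "insert v (insert w ridge) = insert y (insert x ridge)"
    using ridge(1) by (intro card_subset_eq) simp_all
  have "w \<noteq> y"
    using w(3) exchange_notin_C by auto
  moreover have "w \<in> insert y (insert x ridge)" "v \<in> insert y (insert x ridge)"
    using sub by auto
  ultimately have "w = x" "v = y"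
    using w(2) v(2) by auto
  then show "p \<in> {(x, y)}" using pw by simp
next
  fix p assume "p \<in> {(x, y)}"
  moreover have "x \<in> apexes"
    unfolding apexes_def using ridge faces_subset_vertices[OF F_face] x_in_F F_in_C by auto
  moreover have "y \<in> coapexes x"
    unfolding coapexes_def using x_in_F y_vertex y_notin_F by auto
  moreover have "y \<notin> apexes"
    unfolding apexes_def using exchange_notin_C by simp
  ultimately show "p \<in> apex_pairs - {p \<in> apex_pairs. prod.swap p \<in> apex_pairs}"
    by auto
qed

lemma cycle_vanishes_on_\<sigma>:
  assumes cycle: "boundary K' (Suc i) c = 0"
  shows "c \<sigma> = 0"
proof -
  define t where "t p = boundary_sign (fst p) ridge * boundary_sign (snd p) (insert (fst p) ridge)
    * c (insert (snd p) (insert (fst p) ridge))" for p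
  have "finite (vertices K)"
    using complex unfolding simplicial_complex_def vertices_def by auto
  then have fin: "finite apexes" "\<And>w. finite (coapexes w)"
    unfolding apexes_def coapexes_def by simp_all
  have "(\<Sum>p\<in>apex_pairs. t p)
      = (\<Sum>w\<in>apexes. boundary_sign w ridge * boundary K' (Suc i) c (insert w ridge))"
  proof -
    have "insert w ridge \<in> faces K' i" if "w \<in> apexes" for w
      using that C_faces unfolding apexes_def faces_def by auto
    then have "boundary_sign w ridge * boundary K' (Suc i) c (insert w ridge) = (\<Sum>v\<in>coapexes w. t (w, v))"
      if "w \<in> apexes" for w
      using that unfolding boundary_Suc vertices' coapexes_def t_def by (simp add: sum_distrib_left mult.assoc)
    then show ?thesis
      using sum.Sigma[of apexes coapexes "\<lambda>w v. t (w, v)"] fin by simp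
  qed
  also have "\<dots> = 0"
    using cycle by simp
  finally have "(\<Sum>p\<in>apex_pairs. t p) = 0" .
  moreover have "(\<Sum>p\<in>{p \<in> apex_pairs. prod.swap p \<in> apex_pairs}. t p) = 0"
  proof (rule sum_swap_antisymmetric)
    fix p assume "p \<in> apex_pairs"
    then obtain w v where "p = (w, v)" "w \<notin> ridge" "v \<notin> insert w ridge"
      unfolding apexes_def coapexes_def by auto
    then show "t (prod.swap p) = - t p"
      unfolding t_def using boundary_sign_swap[of w ridge v] by (simp add: insert_commute)
  qed
  moreover have "(\<Sum>p\<in>apex_pairs. t p) = (\<Sum>p\<in>apex_pairs - {p \<in> apex_pairs. prod.swap p \<in> apex_pairs}. t p)
      + (\<Sum>p\<in>{p \<in> apex_pairs. prod.swap p \<in> apex_pairs}. t p)"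
    using fin by (intro sum.subset_diff) auto
  ultimately have "t (x, y) = 0"
    unfolding unpaired_apex_pairs by simp
  then show ?thesis
    unfolding t_def using x_in_F by (simp add: boundary_sign_def insert_absorb)
qed

lemma cycles_eq:
  "{c \<in> chains K' (Suc i). boundary K' (Suc i) c = 0} = {c \<in> chains K (Suc i). boundary K (Suc i) c = 0}"
proof (intro equalityI subsetI; clarify)
  fix c assume "c \<in> chains K' (Suc i)" "boundary K' (Suc i) c = 0"
  then have "c \<in> chains K (Suc i)"
    using chains_K_iff cycle_vanishes_on_\<sigma> by blast
  then show "c \<in> chains K (Suc i) \<and> boundary K (Suc i) c = 0"
    using boundary_supercomplex[OF complex Un_upper1 vertices'] \<open>boundary K' (Suc i) c = 0\<close> by simp
next
  fix c assume "c \<in> chains K (Suc i)" "boundary K (Suc i) c = 0"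
  then show "c \<in> chains K' (Suc i) \<and> boundary K' (Suc i) c = 0"
    using chains_K_iff boundary_supercomplex[OF complex Un_upper1 vertices'] by simp
qed

lemma betti_eq: "betti K' (Suc i) = betti K (Suc i)"
  using boundary_image_if_no_faces faces_above_pure_empty[OF complex pure]
    faces_above_pure_empty[OF complex' pure']
  unfolding betti_def cycles_eq Suc_eq_plus1[symmetric] by simp

lemma in_cK: "K' \<in> cK (card (vertices K)) (Suc i) (betti K (Suc i))"
  unfolding cK_def using complex' vertices' pure' betti_eq by simp

end

lemma ex_exchange_leaving_component:
  assumes F0: "F0 \<in> faces K i" and B: "card B = Suc i" "\<not> (up_neighbors K i)\<^sup>*\<^sup>* F0 B"
  obtains F x y where "(up_neighbors K i)\<^sup>*\<^sup>* F0 F" "x \<in> F" "y \<in> B" "y \<notin> F"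
    "\<not> (up_neighbors K i)\<^sup>*\<^sup>* F0 (insert y (F - {x}))"
proof -
  obtain F where F: "(up_neighbors K i)\<^sup>*\<^sup>* F0 F"
    and closest: "\<And>F'. (up_neighbors K i)\<^sup>*\<^sup>* F0 F' \<Longrightarrow> card (F - B) \<le> card (F' - B)"
    using ex_has_least_nat[of "(up_neighbors K i)\<^sup>*\<^sup>* F0" F0 "\<lambda>F. card (F - B)"] by blast
  have "finite F" "card F = Suc i"
    using faces_card[OF rtranclp_up_neighbors_faces[OF F F0]] by auto
  have "finite B"
    using B(1) card_ge_0_finite[of B] by simp
  have "F \<noteq> B" using F B(2) by blast
  moreover have "card F = card B"
    using \<open>card F = Suc i\<close> B(1) by simp
  ultimately have "\<not> F \<subseteq> B" "\<not> B \<subseteq> F"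
    using card_subset_eq \<open>finite B\<close> \<open>finite F\<close> by metis+
  then obtain x y where x: "x \<in> F" "x \<notin> B" and y: "y \<in> B" "y \<notin> F"
    by blast
  have "insert y (F - {x}) - B = (F - B) - {x}"
    using y(1) by auto
  moreover have "0 < card (F - B)"
    using x \<open>finite F\<close> by (auto simp: card_gt_0_iff)
  ultimately have "card (insert y (F - {x}) - B) < card (F - B)"
    using x \<open>finite F\<close> by simp
  then have "\<not> (up_neighbors K i)\<^sup>*\<^sup>* F0 (insert y (F - {x}))"
    using closest leD by blast
  then show ?thesis using that F x(1) y by blast
qed

lemma reachable_if_q_spec_maximal:
  assumes K: "K \<in> cK n (Suc i) \<beta>"
    and max: "\<forall>K'\<in>cK n (Suc i) \<beta>. q_spec K' i \<le> q_spec K i"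
    and f: "f \<in> chains K i" "\<forall>G. 0 \<le> f G" "signless_up_laplacian K i f = (\<lambda>G. q_spec K i * f G)"
    and F0: "0 < f F0"
    and B: "B \<subseteq> vertices K" "card B = Suc i"
  shows "(up_neighbors K i)\<^sup>*\<^sup>* F0 B"
proof (rule ccontr)
  assume "\<not> (up_neighbors K i)\<^sup>*\<^sup>* F0 B"
  have complex: "simplicial_complex K" and pure: "pure_of_dim K (Suc i)"
    using K unfolding cK_def by auto
  have "F0 \<in> faces K i"
    using f(1) F0 unfolding chains_def by force
  then obtain F x y where F: "(up_neighbors K i)\<^sup>*\<^sup>* F0 F" and xy: "x \<in> F" "y \<in> B" "y \<notin> F"
    and leaves: "\<not> (up_neighbors K i)\<^sup>*\<^sup>* F0 (insert y (F - {x}))"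
    using ex_exchange_leaving_component B(2) \<open>\<not> (up_neighbors K i)\<^sup>*\<^sup>* F0 B\<close> by metis
  interpret new_facet K i "{G. (up_neighbors K i)\<^sup>*\<^sup>* F0 G}" F x y
    using complex pure rtranclp_up_neighbors_faces[OF _ \<open>F0 \<in> faces K i\<close>] F xy B(1) leaves
    by unfold_locales auto
  have "K' \<in> cK n (Suc i) \<beta>"
    using in_cK K unfolding cK_def by simp
  then have "q_spec K' i \<le> q_spec K i"
    using max by blast
  moreover have "q_spec K i < q_spec K' i"
    using complex f F_face eigenvector_pos_if_rtranclp[OF complex f(2,3) F F0] card_\<sigma> \<sigma>_notin_K
    by (intro eigenvalue_less_q_spec_add_simplex) auto
  ultimately show False by simp
qed

theorem mainTheorem4:
  fixes n r \<beta> :: nat and K :: "nat set set"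
  assumes "1 \<le> r"
    and "K \<in> cK n r \<beta>"
    and "\<forall>K' \<in> cK n r \<beta>. q_spec K' (r - 1) \<le> q_spec K (r - 1)"
  shows "(\<forall>A. A \<subseteq> vertices K \<and> card A = r \<longrightarrow> A \<in> faces K (r - 1))
         \<and> path_connected_faces K (r - 1)"
proof -
  obtain i where r: "r = Suc i" using assms(1) by (cases r) auto
  have K: "simplicial_complex K" "pure_of_dim K (Suc i)"
    using assms(2) unfolding cK_def r by auto
  obtain f where f: "f \<in> chains K i" "f \<noteq> 0" "\<forall>G. 0 \<le> f G"
    "signless_up_laplacian K i f = (\<lambda>G. q_spec K i * f G)"
    using ex_nonneg_q_spec_eigenvector[OF K(1) faces_nonempty_if_pure[OF K]] by blast
  then obtain F0 where "0 < f F0"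
    by (metis less_eq_real_def zero_fun_apply ext)
  then have F0: "F0 \<in> faces K i"
    using f(1) unfolding chains_def by force
  have reach: "(up_neighbors K i)\<^sup>*\<^sup>* F0 A" if "A \<subseteq> vertices K" "card A = Suc i" for A
    using reachable_if_q_spec_maximal[OF _ _ f(1,3,4) \<open>0 < f F0\<close> that] assms(2,3) unfolding r by simp
  have "(up_neighbors K i)\<^sup>*\<^sup>* F G" if "F \<in> faces K i" "G \<in> faces K i" for F G
    using reach faces_subset_vertices faces_card that
      sympD[OF symp_rtranclp[OF symp_up_neighbors]] rtranclp_trans by metis
  then show ?thesis
    unfolding r using reach rtranclp_up_neighbors_faces[OF _ F0] path_connected_facesI by auto
qed

end
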